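(* Let $V$ be a nonempty finite set, let $f : \{-1,0,1\}^V \to \mathbb{Z}\cup\{+\infty\}$ be an integral bisubmodular function with $f(\mathbf{0})=0$, let $B = \mathrm{P}(f) \cap \mathbb{Z}^V$, and let $p \in B$. Let $u, v, w \in V$ and $s_u \in \{\pm\chi_u\}$, $s_v \in \{\pm\chi_v\}$, $s_w \in \{\pm\chi_w\}$. Then: (1) if $s_u \in \Phi_B(p)$ and $-s_u + s_v \in \Phi_B(p)$, then $s_v \in \Phi_B(p)$; (2) if $s_u + s_v \in \Phi_B(p)$, $-s_v + s_w \in \Phi_B(p)$, and $s_u \neq -s_w$, then $s_u + s_w \in \Phi_B(p)$, or both $s_u \in \Phi_B(p)$ and $s_w \in \Phi_B(p)$.
   Context: $\chi_u$ is the $u$-th unit vector; $\langle p, x\rangle = \sum_u p(u)x(u)$. Let $\Phi = \{\pm \chi_u : u \in V\} \cup \{\pm\chi_u \pm \chi_v : u, v \in V, u \ne v\}$, and for $p \in B$, $\Phi_B(p) = \{\alpha \in \Phi : p + \alpha \in B\}$. For $x, y \in \{-1,0,1\}^V$, define coordinatewise $(x \sqcap y)(u) = x(u)$ if $x(u)=y(u)$ and $0$ otherwise; $(x \sqcup y)(u) = x(u)$ if $x(u)=y(u)$ or $y(u)=0$, $= y(u)$ if $x(u)=0$, and $=0$ if $0 \ne x(u) \ne y(u) \ne 0$. A function $f : \{-1,0,1\}^V \to \mathbb{R}\cup\{+\infty\}$ with $f(\mathbf{0})=0$ is bisubmodular if $f(x)+f(y) \ge f(x\sqcap y) + f(x \sqcup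 y)$ for all $x,y$; integral if its finite values are integers. $\mathrm{P}(f) = \{p \in \mathbb{R}^V : \langle p, x\rangle \le f(x) \ \forall x \in \{-1,0,1\}^V\}$. *)

theory Defs
  imports "HOL-Library.Extended_Real"
begin

text \<open>Vectors in R^V / Z^V are functions on the ambient type, required to vanish outside V.\<close>

definition sign_vecs :: "'a set \<Rightarrow> ('a \<Rightarrow> int) set" where
  "sign_vecs V = {x. (\<forall>u\<in>V. x u \<in> {-1,0,1}) \<and> (\<forall>u. u \<notin> V \<longrightarrow> x u = 0)}"

definition int_vecs :: "'a set \<Rightarrow> ('a \<Rightarrow> int) set" where
  "int_vecs V = {p. \<forall>u. u \<notin> V \<longrightarrow> p u = 0}"

definition chi :: "'a \<Rightarrow> 'a \<Rightarrow> int" where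
  "chi u = (\<lambda>t. if t = u then 1 else 0)"

definition ip :: "'a set \<Rightarrow> ('a \<Rightarrow> int) \<Rightarrow> ('a \<Rightarrow> int) \<Rightarrow> int" where
  "ip V p x = (\<Sum>u\<in>V. p u * x u)"

definition bmeet :: "('a \<Rightarrow> int) \<Rightarrow> ('a \<Rightarrow> int) \<Rightarrow> 'a \<Rightarrow> int" where
  "bmeet x y = (\<lambda>u. if x u = y u then x u else 0)"

definition bjoin :: "('a \<Rightarrow> int) \<Rightarrow> ('a \<Rightarrow> int) \<Rightarrow> 'a \<Rightarrow> int" where
  "bjoin x y = (\<lambda>u. if x u = y u \<or> y u = 0 then x u
                    else if x u = 0 then y u else 0)"

definition integral_bisubmodular :: "'a set \<Rightarrow> (('a \<Rightarrow> int) \<Rightarrow> ereal) \<Rightarrow> bool" where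
  "integral_bisubmodular V f \<longleftrightarrow>
     (\<forall>x\<in>sign_vecs V. f x = \<infinity> \<or> (\<exists>k::int. f x = ereal (of_int k))) \<and>
     f (\<lambda>_. 0) = 0 \<and>
     (\<forall>x\<in>sign_vecs V. \<forall>y\<in>sign_vecs V. f x + f y \<ge> f (bmeet x y) + f (bjoin x y))"

definition intP :: "'a set \<Rightarrow> (('a \<Rightarrow> int) \<Rightarrow> ereal) \<Rightarrow> ('a \<Rightarrow> int) set" where
  "intP V f = {p \<in> int_vecs V. \<forall>x\<in>sign_vecs V. ereal (of_int (ip V p x)) \<le> f x}"

definition Phi :: "'a set \<Rightarrow> ('a \<Rightarrow> int) set" where
  "Phi V = {(\<lambda>t. c * chi u t) | c u. c \<in> {-1,1} \<and> u \<in> V}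
         \<union> {(\<lambda>t. a * chi u t + b * chi v t) | a b u v.
               a \<in> {-1,1} \<and> b \<in> {-1,1} \<and> u \<in> V \<and> v \<in> V \<and> u \<noteq> v}"

definition PhiB :: "'a set \<Rightarrow> ('a \<Rightarrow> int) set \<Rightarrow> ('a \<Rightarrow> int) \<Rightarrow> ('a \<Rightarrow> int) set" where
  "PhiB V B p = {\<alpha> \<in> Phi V. (\<lambda>t. p t + \<alpha> t) \<in> B}"

end

theory Submission
  imports Defs
begin

text \<open>
  For a sign vector x write P = \<langle>p,x\<rangle>; membership of p + \<alpha> in B is the family of
  inequalities P + \<langle>\<alpha>,x\<rangle> \<le> f x. For \<alpha> built from signed unit vectors the
  numbers \<langle>s,x\<rangle> lie in {-1,0,1}, so (1) and the case u = w of (2) follow pointwise: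
  the new left-hand side is bounded by one of the known ones. Otherwise, if neither
  p + s_u + s_w nor p + s_u lay in B, integrality pins down violating vectors y1, y2 exactly,
  with slacks f - \<langle>p,\<cdot>\<rangle> equal to 1 and 0. Their meet and join then have slack at
  least 1 each (from p + s_u + s_v and p - s_v + s_w in B), contradicting bisubmodularity of the
  slack. The symmetry (s_u, s_v, s_w) \<mapsto> (s_w, -s_v, s_u) gives p + s_w \<in> B as well.
\<close>

lemma ip_add: "ip V (\<lambda>t. g t + h t) x = ip V g x + ip V h x"
  by (simp add: ip_def ring_distribs sum.distrib)

lemma ip_diff: "ip V (\<lambda>t. g t - h t) x = ip V g x - ip V h x"
  by (simp add: ip_def algebra_simps sum_subtractf)

lemma ip_scaled_chi:
  assumes "finite V" and "u \<in> V"
  shows "ip V (\<lambda>t. c * chi u t) x = c * x u"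
proof -
  have "ip V (\<lambda>t. c * chi u t) x = (\<Sum>t\<in>V. if t = u then c * x u else 0)"
    unfolding ip_def chi_def by (rule sum.cong) auto
  also have "\<dots> = c * x u"
    using assms by simp
  finally show ?thesis .
qed

lemma ip_bmeet_bjoin:
  assumes "x \<in> sign_vecs V" and "y \<in> sign_vecs V"
  shows "ip V p (bmeet x y) + ip V p (bjoin x y) = ip V p x + ip V p y"
proof -
  have "p t * bmeet x y t + p t * bjoin x y t = p t * x t + p t * y t" if "t \<in> V" for t
  proof -
    have "x t \<in> {-1,0,1}" "y t \<in> {-1,0,1}"
      using assms that unfolding sign_vecs_def by auto
    then show ?thesis
      unfolding bmeet_def bjoin_def by auto
  qed
  then show ?thesis
    unfolding ip_def sum.distrib[symmetric] by (rule sum.cong[OF refl])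
qed

lemma bmeet_in_sign_vecs: "x \<in> sign_vecs V \<Longrightarrow> y \<in> sign_vecs V \<Longrightarrow> bmeet x y \<in> sign_vecs V"
  unfolding sign_vecs_def bmeet_def by auto

lemma bjoin_in_sign_vecs: "x \<in> sign_vecs V \<Longrightarrow> y \<in> sign_vecs V \<Longrightarrow> bjoin x y \<in> sign_vecs V"
  unfolding sign_vecs_def bjoin_def by auto

lemma shift_mem_intP_iff:
  assumes "p \<in> int_vecs V" and "\<alpha> \<in> int_vecs V"
  shows "(\<lambda>t. p t + \<alpha> t) \<in> intP V f \<longleftrightarrow>
           (\<forall>x\<in>sign_vecs V. ereal (of_int (ip V p x + ip V \<alpha> x)) \<le> f x)"
  using assms unfolding intP_def int_vecs_def by (simp add: ip_add)

lemma intP_midpoint: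
  assumes q1: "q1 \<in> intP V f" and q2: "q2 \<in> intP V f" and mid: "\<And>t. q1 t + q2 t = 2 * q t"
  shows "q \<in> intP V f"
  unfolding intP_def
proof (intro CollectI conjI ballI)
  show "q \<in> int_vecs V"
    unfolding int_vecs_def
  proof (intro CollectI allI impI)
    fix t assume "t \<notin> V"
    then have "q1 t = 0" and "q2 t = 0"
      using q1 q2 unfolding intP_def int_vecs_def by auto
    then show "q t = 0"
      using mid[of t] by simp
  qed
next
  fix x assume x: "x \<in> sign_vecs V"
  have "ip V q1 x + ip V q2 x = ip V (\<lambda>t. 2 * q t) x"
    unfolding ip_add[symmetric] mid ..
  also have "\<dots> = 2 * ip V q x"
    unfolding ip_def by (simp add: sum_distrib_left mult.assoc mult.left_commute)
  finally have "ip V q x \<le> ip V q1 x \<or> ip V q x \<le> ip V q2 x"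
    by linarith
  moreover have "ereal (of_int (ip V q1 x)) \<le> f x" "ereal (of_int (ip V q2 x)) \<le> f x"
    using q1 q2 x unfolding intP_def by auto
  ultimately show "ereal (of_int (ip V q x)) \<le> f x"
    by (meson ereal_less_eq(3) of_int_le_iff order_trans)
qed

definition signed_chi :: "'a \<Rightarrow> ('a \<Rightarrow> int) \<Rightarrow> bool" where
  "signed_chi u s \<longleftrightarrow> s = chi u \<or> s = (\<lambda>t. - chi u t)"

lemma signed_chi_iff: "signed_chi u s \<longleftrightarrow> (\<exists>e\<in>{-1,1}. s = (\<lambda>t. e * chi u t))"
  unfolding signed_chi_def by auto

lemma signed_chi_uminus: "signed_chi u s \<Longrightarrow> signed_chi u (\<lambda>t. - s t)"
  unfolding signed_chi_def by auto

lemma signed_chi_in_int_vecs: "u \<in> V \<Longrightarrow> signed_chi u s \<Longrightarrow> s \<in> int_vecs V"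
  unfolding signed_chi_def int_vecs_def chi_def by auto

lemma signed_chi_in_Phi: "u \<in> V \<Longrightarrow> signed_chi u s \<Longrightarrow> s \<in> Phi V"
  unfolding signed_chi_iff Phi_def by blast

lemma signed_chi_add_in_Phi:
  "u \<in> V \<Longrightarrow> w \<in> V \<Longrightarrow> u \<noteq> w \<Longrightarrow> signed_chi u s \<Longrightarrow> signed_chi w s' \<Longrightarrow>
    (\<lambda>t. s t + s' t) \<in> Phi V"
  unfolding signed_chi_iff Phi_def by blast

lemma ip_signed_chi:
  assumes "finite V" and "u \<in> V" and "signed_chi u s"
  obtains e where "e \<in> {-1,1}" and "\<And>x. ip V s x = e * x u"
  using assms ip_scaled_chi unfolding signed_chi_iff by metis

lemma ip_signed_chi_range:
  assumes "finite V" and "u \<in> V" and "signed_chi u s" and "x \<in> sign_vecs V"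
  shows "ip V s x \<in> {-1,0,1}"
proof -
  obtain e where "e \<in> {-1,1}" and "ip V s x = e * x u"
    using ip_signed_chi[OF assms(1-3)] by metis
  moreover have "x u \<in> {-1,0,1}"
    using assms(2,4) unfolding sign_vecs_def by auto
  ultimately show ?thesis by auto
qed

lemma ip_signed_chi_bmeet:
  assumes "finite V" and "u \<in> V" and "signed_chi u s"
  shows "ip V s (bmeet x y) = (if ip V s x = ip V s y then ip V s x else 0)"
proof -
  obtain e where "e \<in> {-1,1}" and "\<And>x. ip V s x = e * x u"
    using ip_signed_chi[OF assms] by metis
  then show ?thesis
    unfolding bmeet_def by auto
qed

lemma ip_signed_chi_bjoin:
  assumes "finite V" and "u \<in> V" and "signed_chi u s"
  shows "ip V s (bjoin x y) =
    (if ip V s x = ip V s y \<or> ip V s y = 0 then ip V s x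
     else if ip V s x = 0 then ip V s y else 0)"
proof -
  obtain e where "e \<in> {-1,1}" and "\<And>x. ip V s x = e * x u"
    using ip_signed_chi[OF assms] by metis
  then show ?thesis
    unfolding bjoin_def by auto
qed

lemma integral_bisubmodular_violation:
  assumes "integral_bisubmodular V f" and "x \<in> sign_vecs V" and "\<not> ereal (of_int m) \<le> f x"
  obtains k where "f x = ereal (of_int k)" and "k < m"
proof -
  have "f x = \<infinity> \<or> (\<exists>k::int. f x = ereal (of_int k))"
    using assms(1,2) unfolding integral_bisubmodular_def by blast
  then show ?thesis
    using assms(3) that by force
qed

lemma slack_bmeet_bjoin_le:
  assumes "integral_bisubmodular V f" and x: "x \<in> sign_vecs V" and y: "y \<in> sign_vecs V"
    and "f x \<le> ereal (of_int (ip V p x + m))" and "f y \<le> ereal (of_int (ip V p y + n))"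
  shows "f (bmeet x y) + f (bjoin x y) \<le> ereal (of_int (ip V p (bmeet x y) + ip V p (bjoin x y) + m + n))"
proof -
  have "f (bmeet x y) + f (bjoin x y) \<le> f x + f y"
    using assms(1) x y unfolding integral_bisubmodular_def by blast
  also have "\<dots> \<le> ereal (of_int (ip V p x + m)) + ereal (of_int (ip V p y + n))"
    using assms(4,5) by (rule add_mono)
  also have "\<dots> = ereal (of_int (ip V p (bmeet x y) + ip V p (bjoin x y) + m + n))"
    using ip_bmeet_bjoin[OF x y, of p] by simp
  finally show ?thesis .
qed

lemma intP_exchange:
  assumes "finite V" and "u \<in> V" and "v \<in> V" and su: "signed_chi u su" and sv: "signed_chi v sv"
    and p: "p \<in> intP V f" and "(\<lambda>t. p t + su t) \<in> intP V f"
    and "(\<lambda>t. p t + (- su t + sv t)) \<in> intP V f"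
  shows "(\<lambda>t. p t + sv t) \<in> intP V f"
proof -
  have int: "p \<in> int_vecs V" "su \<in> int_vecs V" "sv \<in> int_vecs V"
    "(\<lambda>t. - su t + sv t) \<in> int_vecs V"
    using p signed_chi_in_int_vecs[OF \<open>u \<in> V\<close> su] signed_chi_in_int_vecs[OF \<open>v \<in> V\<close> sv]
    unfolding intP_def int_vecs_def by auto
  have "ereal (of_int (ip V p x + ip V sv x)) \<le> f x" if x: "x \<in> sign_vecs V" for x
  proof -
    let ?P = "ip V p x" and ?a = "ip V su x" and ?b = "ip V sv x"
    have "ereal (of_int ?P) \<le> f x"
      using p x unfolding intP_def by blast
    moreover have "ereal (of_int (?P + ?a)) \<le> f x" "ereal (of_int (?P + (?b - ?a))) \<le> f x"
      using assms(7,8) x int by (simp_all add: shift_mem_intP_iff ip_diff)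
    moreover have "?P + ?b \<le> ?P \<or> ?P + ?b \<le> ?P + ?a \<or> ?P + ?b \<le> ?P + (?b - ?a)"
      using ip_signed_chi_range[OF assms(1,2) su x] ip_signed_chi_range[OF assms(1,3) sv x] by auto
    ultimately show ?thesis
      by (meson ereal_less_eq(3) of_int_le_iff order_trans)
  qed
  then show ?thesis
    using int by (simp add: shift_mem_intP_iff)
qed

context
  fixes V :: "'a set" and f :: "('a \<Rightarrow> int) \<Rightarrow> ereal" and p su sv sw :: "'a \<Rightarrow> int"
    and u v w :: 'a
  assumes finite: "finite V" and f: "integral_bisubmodular V f" and p: "p \<in> intP V f"
    and u: "u \<in> V" and v: "v \<in> V" and w: "w \<in> V"
    and su: "signed_chi u su" and sv: "signed_chi v sv" and sw: "signed_chi w sw"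
    and uv: "(\<lambda>t. p t + (su t + sv t)) \<in> intP V f"
    and vw: "(\<lambda>t. p t + (- sv t + sw t)) \<in> intP V f"
begin

lemma augment_bounds:
  assumes x: "x \<in> sign_vecs V"
  shows "ip V su x \<in> {-1,0,1}" and "ip V sv x \<in> {-1,0,1}" and "ip V sw x \<in> {-1,0,1}"
    and "ereal (of_int (ip V p x)) \<le> f x"
    and "ereal (of_int (ip V p x + (ip V su x + ip V sv x))) \<le> f x"
    and "ereal (of_int (ip V p x + (ip V sw x - ip V sv x))) \<le> f x"
proof -
  show "ip V su x \<in> {-1,0,1}" "ip V sv x \<in> {-1,0,1}" "ip V sw x \<in> {-1,0,1}"
    using ip_signed_chi_range[OF finite u su x] ip_signed_chi_range[OF finite v sv x]
      ip_signed_chi_range[OF finite w sw x] .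
  show "ereal (of_int (ip V p x)) \<le> f x"
    using p x unfolding intP_def by blast
  have int: "p \<in> int_vecs V" "(\<lambda>t. su t + sv t) \<in> int_vecs V" "(\<lambda>t. - sv t + sw t) \<in> int_vecs V"
    using p signed_chi_in_int_vecs[OF u su] signed_chi_in_int_vecs[OF v sv]
      signed_chi_in_int_vecs[OF w sw]
    unfolding intP_def int_vecs_def by auto
  have "ereal (of_int (ip V p x + ip V (\<lambda>t. su t + sv t) x)) \<le> f x"
    using uv x shift_mem_intP_iff[OF int(1,2)] by blast
  then show "ereal (of_int (ip V p x + (ip V su x + ip V sv x))) \<le> f x"
    by (simp only: ip_add)
  have "ereal (of_int (ip V p x + ip V (\<lambda>t. - sv t + sw t) x)) \<le> f x"
    using vw x shift_mem_intP_iff[OF int(1,3)] by blast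
  then show "ereal (of_int (ip V p x + (ip V sw x - ip V sv x))) \<le> f x"
    by (simp only: uminus_add_conv_diff ip_diff)
qed

lemma augment_violator_sum:
  assumes x: "x \<in> sign_vecs V" and "\<not> ereal (of_int (ip V p x + (ip V su x + ip V sw x))) \<le> f x"
  shows "ip V su x = 1" and "ip V sv x = 0" and "ip V sw x = 1"
    and "f x = ereal (of_int (ip V p x + 1))"
proof -
  obtain k where k: "f x = ereal (of_int k)" "k < ip V p x + (ip V su x + ip V sw x)"
    using integral_bisubmodular_violation[OF f x assms(2)] by metis
  have "ip V p x \<le> k" "ip V p x + (ip V su x + ip V sv x) \<le> k" "ip V p x + (ip V sw x - ip V sv x) \<le> k"
    using augment_bounds(4-6)[OF x] unfolding k(1) by simp_all
  then have "ip V su x = 1 \<and> ip V sv x = 0 \<and> ip V sw x = 1 \<and> k = ip V p x + 1"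
    using augment_bounds(1-3)[OF x] k(2) by auto
  then show "ip V su x = 1" "ip V sv x = 0" "ip V sw x = 1" "f x = ereal (of_int (ip V p x + 1))"
    using k(1) by simp_all
qed

lemma augment_violator_unit:
  assumes x: "x \<in> sign_vecs V" and "\<not> ereal (of_int (ip V p x + ip V su x)) \<le> f x"
  shows "ip V su x = 1" and "ip V sv x = -1" and "ip V sw x = -1"
    and "f x = ereal (of_int (ip V p x))"
proof -
  obtain k where k: "f x = ereal (of_int k)" "k < ip V p x + ip V su x"
    using integral_bisubmodular_violation[OF f x assms(2)] by metis
  have "ip V p x \<le> k" "ip V p x + (ip V su x + ip V sv x) \<le> k" "ip V p x + (ip V sw x - ip V sv x) \<le> k"
    using augment_bounds(4-6)[OF x] unfolding k(1) by simp_all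
  then have "ip V su x = 1 \<and> ip V sv x = -1 \<and> ip V sw x = -1 \<and> k = ip V p x"
    using augment_bounds(1-3)[OF x] k(2) by auto
  then show "ip V su x = 1" "ip V sv x = -1" "ip V sw x = -1" "f x = ereal (of_int (ip V p x))"
    using k(1) by simp_all
qed

lemma intP_augment: "(\<lambda>t. p t + su t) \<in> intP V f \<or> (\<lambda>t. p t + (su t + sw t)) \<in> intP V f"
proof (rule ccontr)
  have int: "p \<in> int_vecs V" "su \<in> int_vecs V" "(\<lambda>t. su t + sw t) \<in> int_vecs V"
    using p signed_chi_in_int_vecs[OF u su] signed_chi_in_int_vecs[OF w sw]
    unfolding intP_def int_vecs_def by auto
  assume "\<not> ?thesis"
  then have "\<not> (\<forall>x\<in>sign_vecs V. ereal (of_int (ip V p x + (ip V su x + ip V sw x))) \<le> f x)"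
    and "\<not> (\<forall>x\<in>sign_vecs V. ereal (of_int (ip V p x + ip V su x)) \<le> f x)"
    using shift_mem_intP_iff[OF int(1,3)] shift_mem_intP_iff[OF int(1,2)] unfolding ip_add by blast+
  then obtain y1 y2 where y1: "y1 \<in> sign_vecs V"
      "\<not> ereal (of_int (ip V p y1 + (ip V su y1 + ip V sw y1))) \<le> f y1"
    and y2: "y2 \<in> sign_vecs V" "\<not> ereal (of_int (ip V p y2 + ip V su y2)) \<le> f y2"
    by blast
  note y1_coords = augment_violator_sum[OF y1] and y2_coords = augment_violator_unit[OF y2]
  let ?P = "ip V p" and ?m = "bmeet y1 y2" and ?j = "bjoin y1 y2"
  have "ip V su ?m = 1" "ip V sv ?m = 0"
    unfolding ip_signed_chi_bmeet[OF finite u su] ip_signed_chi_bmeet[OF finite v sv]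
    using y1_coords y2_coords by simp_all
  then have meet_slack: "ereal (of_int (?P ?m + 1)) \<le> f ?m"
    using augment_bounds(5)[OF bmeet_in_sign_vecs[OF y1(1) y2(1)]] by simp
  have "ip V sv ?j = -1" "ip V sw ?j = 0"
    unfolding ip_signed_chi_bjoin[OF finite v sv] ip_signed_chi_bjoin[OF finite w sw]
    using y1_coords y2_coords by simp_all
  then have join_slack: "ereal (of_int (?P ?j + 1)) \<le> f ?j"
    using augment_bounds(6)[OF bjoin_in_sign_vecs[OF y1(1) y2(1)]] by simp
  have "ereal (of_int (?P ?m + ?P ?j + 2)) \<le> f ?m + f ?j"
    using add_mono[OF meet_slack join_slack] by (simp add: add.commute)
  also have "\<dots> \<le> ereal (of_int (?P ?m + ?P ?j + 1 + 0))"
    by (rule slack_bmeet_bjoin_le[OF f y1(1) y2(1)]) (simp_all add: y1_coords y2_coords)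
  finally show False
    by simp
qed

end

theorem mainTheorem4:
  fixes V :: "'a set" and f :: "('a \<Rightarrow> int) \<Rightarrow> ereal" and p su sv sw :: "'a \<Rightarrow> int"
    and u v w :: 'a
  assumes "finite V" and "V \<noteq> {}"
    and "integral_bisubmodular V f"
    and "B = intP V f"
    and "p \<in> B"
    and "u \<in> V" and "v \<in> V" and "w \<in> V"
    and "su = chi u \<or> su = (\<lambda>t. - chi u t)"
    and "sv = chi v \<or> sv = (\<lambda>t. - chi v t)"
    and "sw = chi w \<or> sw = (\<lambda>t. - chi w t)"
  shows "(su \<in> PhiB V B p \<and> (\<lambda>t. - su t + sv t) \<in> PhiB V B p \<longrightarrow> sv \<in> PhiB V B p)
       \<and> ((\<lambda>t. su t + sv t) \<in> PhiB V B p \<and> (\<lambda>t. - sv t + sw t) \<in> PhiB V B p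
            \<and> su \<noteq> (\<lambda>t. - sw t)
          \<longrightarrow> (\<lambda>t. su t + sw t) \<in> PhiB V B p \<or> (su \<in> PhiB V B p \<and> sw \<in> PhiB V B p))"
proof -
  have su: "signed_chi u su" and sv: "signed_chi v sv" and sw: "signed_chi w sw"
    using assms(9-11) unfolding signed_chi_def .
  have p: "p \<in> intP V f"
    using assms(4,5) by simp
  have PhiB_iff: "\<alpha> \<in> PhiB V B p \<longleftrightarrow> \<alpha> \<in> Phi V \<and> (\<lambda>t. p t + \<alpha> t) \<in> intP V f" for \<alpha>
    unfolding PhiB_def assms(4) by simp
  show ?thesis
  proof (intro conjI impI)
    assume "su \<in> PhiB V B p \<and> (\<lambda>t. - su t + sv t) \<in> PhiB V B p"
    then show "sv \<in> PhiB V B p"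
      using intP_exchange[OF assms(1,6,7) su sv p] signed_chi_in_Phi[OF assms(7) sv]
      by (simp add: PhiB_iff)
  next
    assume H: "(\<lambda>t. su t + sv t) \<in> PhiB V B p \<and> (\<lambda>t. - sv t + sw t) \<in> PhiB V B p
      \<and> su \<noteq> (\<lambda>t. - sw t)"
    then have uv: "(\<lambda>t. p t + (su t + sv t)) \<in> intP V f"
      and vw: "(\<lambda>t. p t + (- sv t + sw t)) \<in> intP V f"
      by (simp_all add: PhiB_iff)
    show "(\<lambda>t. su t + sw t) \<in> PhiB V B p \<or> (su \<in> PhiB V B p \<and> sw \<in> PhiB V B p)"
    proof (cases "u = w")
      case True
      then have "sw = su"
        using su sw H unfolding signed_chi_def by auto
      have "(\<lambda>t. p t + su t) \<in> intP V f"
        by (rule intP_midpoint[OF uv vw]) (simp add: \<open>sw = su\<close>)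
      then show ?thesis
        using signed_chi_in_Phi[OF assms(6) su] by (simp add: PhiB_iff \<open>sw = su\<close>)
    next
      case False
      have wu: "(\<lambda>t. p t + (sw t + - sv t)) \<in> intP V f"
        using vw by (simp add: add.commute)
      have vu: "(\<lambda>t. p t + (- (- sv t) + su t)) \<in> intP V f"
        using uv by (simp add: add.commute)
      consider "(\<lambda>t. p t + (su t + sw t)) \<in> intP V f"
        | "(\<lambda>t. p t + su t) \<in> intP V f" and "(\<lambda>t. p t + sw t) \<in> intP V f"
        using intP_augment[OF assms(1,3) p assms(6-8) su sv sw uv vw]
          intP_augment[OF assms(1,3) p assms(8,7,6) sw signed_chi_uminus[OF sv] su wu vu]
        by (auto simp: add.commute)
      then show ?thesis
        using signed_chi_add_in_Phi[OF assms(6,8) False su sw]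
          signed_chi_in_Phi[OF assms(6) su] signed_chi_in_Phi[OF assms(8) sw]
        by cases (simp_all add: PhiB_iff)
    qed
  qed
qed

end
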